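(* Let $\mathcal{R}=(\mathcal{W},\mathcal{R}_1,\mathcal{R}_2)$ be a domino set with $\mathcal{W}=\{1,\dots,m\}$, and let $\mathcal{S}$ be the cyclic triomino set constructed from $\mathcal{R}$ as below (for any fixed $n\ge 2m+1$). Then the $\mathcal{S}$-cyclic triomino problem is solvable if and only if the $\mathcal{R}$-domino problem is solvable.
   Context: A domino set is $\mathcal{R}=(\mathcal{W},\mathcal{R}_1,\mathcal{R}_2)$ with $\mathcal{W}$ non-empty finite and $\mathcal{R}_1,\mathcal{R}_2\subset\mathcal{W}^2$. The $\mathcal{R}$-domino problem is solvable if there is $\mathcal{T}:\mathbb{Z}^2\to\mathcal{W}$ with $(\mathcal{T}(s),\mathcal{T}(s+e_i))\in\mathcal{R}_i$ for all $s\in\mathbb{Z}^2$, $i=1,2$, where $e_1=(1,0)$, $e_2=(0,1)$. Let $u_1=(1,0),u_2=(0,1),u_3=(-1,0),u_4=(0,-1)$, indices mod 4. Regard integers as elements of $\mathbb{Z}_n$. Let $L=\{(w,0,0): w\in\mathcal{W}\}$, $K_1=L\cup\{(0,b,a):(a,b)\in\mathcal{R}_1\}$, $K_2=L\cup\{(0,a,b):(a,b)\in\mathcal{R}_2\}$, $K_3=L\cup\{(0,a,b):(a,b)\in\mathcal{R}_1\}$, $K_4=L\cup\{(0,b,a):(a,b)\in\mathcal{R}_2\}$. Let $\mathcal{V}=\mathbb{Z}_n$, $\mathcal{S}_i=\{(a+k,b+k,c+k):(a,b,c)\in K_i, k\in\mathcal{V}\}$, $\mathcal{S}_{i+4}=\mathcal{S}_i$,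 and $\mathcal{S}=(\mathcal{V},\mathcal{S}_1,\dots,\mathcal{S}_4)$. The $\mathcal{S}$-cyclic triomino problem is solvable if there exists $\mathcal{T}:\mathbb{Z}^2\to\mathcal{V}$ with $(\mathcal{T}(s),\mathcal{T}(s+u_i),\mathcal{T}(s+u_{i+1}))\in\mathcal{S}_i$ for every $s\in\mathbb{Z}^2$ and $1\le i\le 4$. *)

theory Defs
  imports Main
begin

type_synonym cell = "int \<times> int"

definition vadd :: "cell \<Rightarrow> cell \<Rightarrow> cell" where
  "vadd s t = (fst s + fst t, snd s + snd t)"

definition domino_solvable :: "'a set \<Rightarrow> ('a \<times> 'a) set \<Rightarrow> ('a \<times> 'a) set \<Rightarrow> bool" where
  "domino_solvable W R1 R2 \<longleftrightarrow>
     (\<exists>T :: cell \<Rightarrow> 'a. (\<forall>s. T s \<in> W) \<and>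
        (\<forall>s. (T s, T (vadd s (1,0))) \<in> R1 \<and> (T s, T (vadd s (0,1))) \<in> R2))"

definition u :: "nat \<Rightarrow> cell" where
  "u i = (if i mod 4 = 1 then (1,0) else if i mod 4 = 2 then (0,1)
          else if i mod 4 = 3 then (-1,0) else (0,-1))"

(* Cyclic triomino problem: V = Z_n represented as {0..<n} *)
definition cyclic_triomino_solvable ::
  "nat \<Rightarrow> (nat \<Rightarrow> (int \<times> int \<times> int) set) \<Rightarrow> bool" where
  "cyclic_triomino_solvable n S \<longleftrightarrow>
     (\<exists>T :: cell \<Rightarrow> int. (\<forall>s. T s \<in> {0..<int n}) \<and>
        (\<forall>s. \<forall>i\<in>{1..4}. (T s, T (vadd s (u i)), T (vadd s (u (Suc i)))) \<in> S i))"

definition Lset :: "nat \<Rightarrow> (int \<times> int \<times> int) set" where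
  "Lset m = {(w,0,0) | w. w \<in> {1..int m}}"

definition Kset :: "nat \<Rightarrow> (int \<times> int) set \<Rightarrow> (int \<times> int) set \<Rightarrow> nat \<Rightarrow> (int \<times> int \<times> int) set" where
  "Kset m R1 R2 i =
     (if i = 1 then Lset m \<union> {(0,b,a) | a b. (a,b) \<in> R1}
      else if i = 2 then Lset m \<union> {(0,a,b) | a b. (a,b) \<in> R2}
      else if i = 3 then Lset m \<union> {(0,a,b) | a b. (a,b) \<in> R1}
      else Lset m \<union> {(0,b,a) | a b. (a,b) \<in> R2})"

definition Sset :: "nat \<Rightarrow> nat \<Rightarrow> (int \<times> int) set \<Rightarrow> (int \<times> int) set \<Rightarrow> nat \<Rightarrow> (int \<times> int \<times> int) set" where
  "Sset n m R1 R2 i =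
     {((a + k) mod int n, (b + k) mod int n, (c + k) mod int n) | a b c k.
        (a,b,c) \<in> Kset m R1 R2 (((i + 3) mod 4) + 1) \<and> k \<in> {0..<int n}}"

end

theory Submission
  imports Defs
begin

(* Call a cell of a cyclic triomino tiling T a peak if T exceeds the value of its right
   neighbour by 1..m modulo n.  Since n > 2m, "exceeds by 1..m" is asymmetric, and this
   forces every triple at a peak to come from L, so that all four neighbours of a peak carry
   one common value, and every triple at a non-peak to come from the K-part.  Hence the peaks
   form a checkerboard colour class, each peak has a height in {1..m} over its neighbours,
   and the K-triples at the valleys say precisely that these heights, read along the
   diagonal lattice of peaks, solve the domino problem.  Conversely, a domino tiling placed
   on the odd cells, with 0 on the even cells, solves the triomino problem. *)

definition cyc_less :: "nat \<Rightarrow> nat \<Rightarrow> int \<Rightarrow> int \<Rightarrow> bool" where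
  "cyc_less n m x y \<longleftrightarrow> (y - x) mod int n \<in> {1..int m}"

lemma cyc_less_asym:
  assumes "2 * m + 1 \<le> n" "cyc_less n m x y"
  shows "\<not> cyc_less n m y x"
proof -
  have d: "(y - x) mod int n \<in> {1..int m}" using assms(2) unfolding cyc_less_def .
  then have "(x - y) mod int n = int n - (y - x) mod int n"
    using zmod_zminus1_eq_if[of "y - x" "int n"] by simp
  moreover have "int n \<ge> 2 * int m + 1" using assms(1) by linarith
  ultimately have "(x - y) mod int n > int m" using d by simp
  then show ?thesis unfolding cyc_less_def by simp
qed

lemma index_mod_4_eq:
  assumes "i \<in> {1..4}"
  shows "(i + 3) mod 4 + 1 = (i :: nat)"
proof -
  have "i = 1 \<or> i = 2 \<or> i = 3 \<or> i = 4" using assms by auto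
  then show ?thesis by auto
qed

lemma Sset_memI:
  assumes "i \<in> {1..4}" "x \<in> {0..<int n}" "y \<in> {0..<int n}" "z \<in> {0..<int n}"
    and "(z = y \<and> cyc_less n m y x) \<or> (0, (y - x) mod int n, (z - x) mod int n) \<in> Kset m R1 R2 i"
  shows "(x, y, z) \<in> Sset n m R1 R2 i"
  using assms(5)
proof
  assume zy: "z = y \<and> cyc_less n m y x"
  then have "((x - y) mod int n, 0, 0) \<in> Kset m R1 R2 i"
    unfolding cyc_less_def Kset_def Lset_def by auto
  then show ?thesis unfolding Sset_def index_mod_4_eq[OF assms(1)] using assms(2,3) zy
    by (intro CollectI exI[of _ "(x - y) mod int n"] exI[of _ 0] exI[of _ 0] exI[of _ y])
      (simp add: mod_add_left_eq)
next
  assume "(0, (y - x) mod int n, (z - x) mod int n) \<in> Kset m R1 R2 i"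
  then show ?thesis unfolding Sset_def index_mod_4_eq[OF assms(1)] using assms(2-4)
    by (intro CollectI exI[of _ 0] exI[of _ "(y - x) mod int n"] exI[of _ "(z - x) mod int n"]
        exI[of _ x]) (simp add: mod_add_left_eq)
qed

lemma Sset_memD:
  assumes "i \<in> {1..4}" "x \<in> {0..<int n}" "y \<in> {0..<int n}" "z \<in> {0..<int n}"
    and "m < n" "R1 \<subseteq> {1..int m} \<times> {1..int m}" "R2 \<subseteq> {1..int m} \<times> {1..int m}"
    and "(x, y, z) \<in> Sset n m R1 R2 i"
  shows "(z = y \<and> cyc_less n m y x) \<or> (0, (y - x) mod int n, (z - x) mod int n) \<in> Kset m R1 R2 i"
proof -
  obtain a b c k where xyz: "x = (a + k) mod int n" "y = (b + k) mod int n" "z = (c + k) mod int n"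
    and abc: "(a, b, c) \<in> Kset m R1 R2 i" and k: "k \<in> {0..<int n}"
    using assms(8) unfolding Sset_def index_mod_4_eq[OF assms(1)] by blast
  consider "a \<in> {1..int m}" "b = 0" "c = 0" | "a = 0" "b \<in> {1..int m}" "c \<in> {1..int m}"
    using abc assms(6,7) unfolding Kset_def Lset_def by (auto split: if_splits)
  then show ?thesis
  proof cases
    case 1
    then have "(x - y) mod int n = a" using xyz k assms(5) by (simp add: mod_diff_left_eq)
    then show ?thesis using 1 xyz unfolding cyc_less_def by simp
  next
    case 2
    then have "(y - x) mod int n = b" "(z - x) mod int n = c"
      using xyz k assms(5) by (simp_all add: mod_diff_left_eq)
    then show ?thesis using 2 abc by simp
  qed
qed

lemma int_alternating:
  fixes P :: "int \<Rightarrow> bool"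
  assumes "\<And>x. P (x + 1) \<longleftrightarrow> \<not> P x"
  shows "P x \<longleftrightarrow> (P 0 \<longleftrightarrow> even x)"
proof (induction x rule: int_induct[where k = 0])
  case (step1 i)
  then show ?case using assms[of i] by simp
next
  case (step2 i)
  have "P (i - 1) \<longleftrightarrow> \<not> P i" using assms[of "i - 1"] by simp
  then show ?case using step2 by simp
qed simp

lemma u_cases:
  obtains "u i = (1, 0)" | "u i = (0, 1)" | "u i = (-1, 0)" | "u i = (0, -1)"
  unfolding u_def by metis

lemma u_coord_sum_odd: "odd (fst (u i) + snd (u i))"
  by (cases i rule: u_cases) simp_all

lemma even_vadd_u_iff:
  "even (fst (vadd s (u i)) + snd (vadd s (u i))) \<longleftrightarrow> odd (fst s + snd s)"
  using u_coord_sum_odd[of i] unfolding vadd_def by (simp only: fst_conv snd_conv even_add) argo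

lemma vadd_u_opposite: "vadd (vadd s (u i)) (u (i + 2)) = s"
proof -
  have "i mod 4 = 0 \<or> i mod 4 = 1 \<or> i mod 4 = 2 \<or> i mod 4 = 3" by presburger
  moreover have "(i + 2) mod 4 = (i mod 4 + 2) mod 4" by presburger
  ultimately show ?thesis unfolding u_def vadd_def by auto
qed

locale cyclic_triomino_tiling =
  fixes n m :: nat and R1 R2 :: "(int \<times> int) set" and T :: "cell \<Rightarrow> int"
  assumes R1_bounds: "R1 \<subseteq> {1..int m} \<times> {1..int m}"
    and R2_bounds: "R2 \<subseteq> {1..int m} \<times> {1..int m}"
    and n_large: "2 * m + 1 \<le> n"
    and T_range: "T s \<in> {0..<int n}"
    and T_tiles: "i \<in> {1..4} \<Longrightarrow>
      (T s, T (vadd s (u i)), T (vadd s (u (Suc i)))) \<in> Sset n m R1 R2 i"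
begin

abbreviation below :: "int \<Rightarrow> int \<Rightarrow> bool" (infix "\<prec>" 50) where
  "x \<prec> y \<equiv> cyc_less n m x y"

lemma below_asym: "x \<prec> y \<Longrightarrow> \<not> y \<prec> x"
  using cyc_less_asym[OF n_large] .

lemma tile_cases:
  assumes "i \<in> {1..4}"
  obtains "T (vadd s (u (Suc i))) = T (vadd s (u i))" "T (vadd s (u i)) \<prec> T s"
  | "T s \<prec> T (vadd s (u i))" "T s \<prec> T (vadd s (u (Suc i)))"
    "(0, (T (vadd s (u i)) - T s) mod int n, (T (vadd s (u (Suc i))) - T s) mod int n)
       \<in> Kset m R1 R2 i"
proof -
  have "m < n" using n_large by simp
  from Sset_memD[OF assms T_range T_range T_range this R1_bounds R2_bounds T_tiles[OF assms]]
  consider "T (vadd s (u (Suc i))) = T (vadd s (u i))" "T (vadd s (u i)) \<prec> T s"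
    | "(0, (T (vadd s (u i)) - T s) mod int n, (T (vadd s (u (Suc i))) - T s) mod int n)
         \<in> Kset m R1 R2 i"
    by blast
  then show ?thesis
  proof cases
    case 2
    then have "(T (vadd s (u i)) - T s) mod int n \<in> {1..int m}"
      "(T (vadd s (u (Suc i))) - T s) mod int n \<in> {1..int m}"
      using R1_bounds R2_bounds unfolding Kset_def Lset_def by (auto split: if_splits)
    with 2 that(2) show ?thesis unfolding cyc_less_def by blast
  qed (rule that(1))
qed

definition peak :: "cell \<Rightarrow> bool" where
  "peak s \<longleftrightarrow> T (vadd s (1, 0)) \<prec> T s"

lemma below_Suc_iff:
  assumes "i \<in> {1..4}"
  shows "T (vadd s (u (Suc i))) \<prec> T s \<longleftrightarrow> T (vadd s (u i)) \<prec> T s"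
  using assms by (cases rule: tile_cases) (auto dest: below_asym)

lemma below_iff_peak:
  assumes "i \<in> {1..4}"
  shows "T (vadd s (u i)) \<prec> T s \<longleftrightarrow> peak s"
proof -
  have "i = 1 \<or> i = 2 \<or> i = 3 \<or> i = 4" using assms by auto
  then show ?thesis
    using below_Suc_iff[of 1 s] below_Suc_iff[of 2 s] below_Suc_iff[of 3 s]
    unfolding peak_def by (auto simp: u_def)
qed

lemma above_iff_not_peak:
  assumes "i \<in> {1..4}"
  shows "T s \<prec> T (vadd s (u i)) \<longleftrightarrow> \<not> peak s"
  using assms
  by (cases rule: tile_cases) (auto simp: below_iff_peak[OF assms, symmetric] dest: below_asym)

lemma peak_step:
  assumes "i \<in> {1, 2}"
  shows "peak (vadd s (u i)) \<longleftrightarrow> \<not> peak s"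
proof -
  have "i + 2 \<in> {1..4}" using assms by auto
  from below_iff_peak[OF this, of "vadd s (u i)", unfolded vadd_u_opposite]
  have "peak (vadd s (u i)) \<longleftrightarrow> T s \<prec> T (vadd s (u i))" by simp
  also have "\<dots> \<longleftrightarrow> \<not> peak s" using assms by (intro above_iff_not_peak) auto
  finally show ?thesis .
qed

lemma peak_parity: "peak s \<longleftrightarrow> (peak (0, 0) \<longleftrightarrow> even (fst s + snd s))"
proof -
  have right: "peak (x + 1, y) \<longleftrightarrow> \<not> peak (x, y)" for x y
    using peak_step[of 1 "(x, y)"] by (simp add: u_def vadd_def)
  have up: "peak (x, y + 1) \<longleftrightarrow> \<not> peak (x, y)" for x y
    using peak_step[of 2 "(x, y)"] by (simp add: u_def vadd_def)
  have "peak s \<longleftrightarrow> (peak (0, snd s) \<longleftrightarrow> even (fst s))"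
    using int_alternating[of "\<lambda>x. peak (x, snd s)" "fst s"] right by simp
  moreover have "peak (0, snd s) \<longleftrightarrow> (peak (0, 0) \<longleftrightarrow> even (snd s))"
    using int_alternating[of "\<lambda>y. peak (0, y)" "snd s"] up by simp
  ultimately show ?thesis by (simp only: even_add) argo
qed

lemma peak_neighbour_iff: "peak (vadd s (u i)) \<longleftrightarrow> \<not> peak s"
  using even_vadd_u_iff[of s i] peak_parity[of s] peak_parity[of "vadd s (u i)"] by argo

lemma peak_neighbours:
  assumes "peak h"
  shows "T (vadd h (u i)) = T (vadd h (1, 0))"
proof -
  have step: "T (vadd h (u (Suc j))) = T (vadd h (u j))" if "j \<in> {1..4}" for j
    using that by (cases rule: tile_cases) (use assms above_iff_not_peak[OF that] in auto)
  from step[of 1] step[of 2] step[of 3] show ?thesis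
    by (cases i rule: u_cases) (simp_all add: u_def)
qed

lemma valley_tile:
  assumes "\<not> peak s" "i \<in> {1..4}"
  shows "(0, (T (vadd s (u i)) - T s) mod int n, (T (vadd s (u (Suc i))) - T s) mod int n)
    \<in> Kset m R1 R2 i"
  using assms(2) by (cases rule: tile_cases) (use assms below_iff_peak[OF assms(2)] in auto)

definition height :: "cell \<Rightarrow> int" where
  "height h = (T h - T (vadd h (1, 0))) mod int n"

lemma height_peak: "peak h \<Longrightarrow> height h \<in> {1..int m}"
  unfolding peak_def height_def cyc_less_def .

lemma height_around_valley:
  assumes "\<not> peak s"
  shows "height (vadd s (u i)) = (T (vadd s (u i)) - T s) mod int n"
proof -
  have "peak (vadd s (u i))" using assms peak_neighbour_iff by blast
  from peak_neighbours[OF this, of "i + 2", unfolded vadd_u_opposite]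
  show ?thesis unfolding height_def by simp
qed

lemma valley_dominoes:
  assumes "\<not> peak s"
  shows "(height (vadd s (0, 1)), height (vadd s (1, 0))) \<in> R1"
    and "(height (vadd s (0, 1)), height (vadd s (-1, 0))) \<in> R2"
  using valley_tile[OF assms, of 1] valley_tile[OF assms, of 2]
    height_around_valley[OF assms, of 1] height_around_valley[OF assms, of 2]
    height_around_valley[OF assms, of 3]
  by (auto simp: u_def Kset_def Lset_def)

theorem domino_solvable: "domino_solvable {1..int m} R1 R2"
proof -
  obtain c :: int where "peak (c, 0)"
    using peak_neighbour_iff[of "(0, 0)" 1] by (cases "peak (0, 0)") (auto simp: u_def vadd_def)
  define lattice :: "cell \<Rightarrow> cell" where "lattice p = (c + fst p - snd p, - fst p - snd p)" for p
  have peak_lattice: "peak (lattice p)" for p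
  proof -
    have "even (fst (lattice p) + snd (lattice p)) \<longleftrightarrow> even c"
      unfolding lattice_def by simp
    then show ?thesis
      using peak_parity[of "lattice p"] peak_parity[of "(c, 0)"] \<open>peak (c, 0)\<close> by simp
  qed
  have "(height (lattice p), height (lattice (vadd p (1, 0)))) \<in> R1 \<and>
     (height (lattice p), height (lattice (vadd p (0, 1)))) \<in> R2" for p
  proof -
    define s where "s = vadd (lattice p) (0, -1)"
    have "\<not> peak s"
      using peak_neighbour_iff[of "lattice p" 4] peak_lattice unfolding s_def by (simp add: u_def)
    moreover have "vadd s (0, 1) = lattice p" "vadd s (1, 0) = lattice (vadd p (1, 0))"
      "vadd s (-1, 0) = lattice (vadd p (0, 1))"
      unfolding s_def lattice_def vadd_def by simp_all
    ultimately show ?thesis using valley_dominoes by metis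
  qed
  then show ?thesis unfolding domino_solvable_def using height_peak[OF peak_lattice]
    by (intro exI[of _ "\<lambda>p. height (lattice p)"]) blast
qed

end

(* Inverse of p \<mapsto> (1 + fst p - snd p, - fst p - snd p), which enumerates the odd cells. *)
definition domino_coords :: "cell \<Rightarrow> cell" where
  "domino_coords s = ((fst s - snd s - 1) div 2, (1 - fst s - snd s) div 2)"

lemma domino_coords_around:
  assumes "even (fst s + snd s)"
  defines "P \<equiv> domino_coords (vadd s (0, 1))"
  shows "domino_coords (vadd s (1, 0)) = vadd P (1, 0)"
    and "domino_coords (vadd s (-1, 0)) = vadd P (0, 1)"
    and "domino_coords (vadd s (0, -1)) = vadd (vadd P (1, 0)) (0, 1)"
    and "domino_coords (vadd s (0, -1)) = vadd (vadd P (0, 1)) (1, 0)"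
  using assms unfolding P_def domino_coords_def vadd_def by (auto; presburger)+

lemma cyclic_triomino_solvable_if_domino_solvable:
  assumes "m < n" and "domino_solvable {1..int m} R1 R2"
  shows "cyclic_triomino_solvable n (Sset n m R1 R2)"
proof -
  obtain D :: "cell \<Rightarrow> int" where D_range: "\<And>p. D p \<in> {1..int m}"
    and D_R1: "\<And>p. (D p, D (vadd p (1, 0))) \<in> R1"
    and D_R2: "\<And>p. (D p, D (vadd p (0, 1))) \<in> R2"
    using assms(2) unfolding domino_solvable_def by blast
  define T :: "cell \<Rightarrow> int" where
    "T s = (if even (fst s + snd s) then 0 else D (domino_coords s))" for s
  have T_range: "T s \<in> {0..<int n}" for s
    using D_range[of "domino_coords s"] assms(1) unfolding T_def by auto
  have "(T s, T (vadd s (u i)), T (vadd s (u (Suc i)))) \<in> Sset n m R1 R2 i"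
    if i: "i \<in> {1..4}" for s i
  proof (cases "even (fst s + snd s)")
    case True
    define P where "P = domino_coords (vadd s (0, 1))"
    have nb: "T (vadd s (u j)) = D (domino_coords (vadd s (u j)))" for j
      using True even_vadd_u_iff[of s j] unfolding T_def by simp
    have "i = 1 \<or> i = 2 \<or> i = 3 \<or> i = 4" using i by auto
    then have "(0, T (vadd s (u i)), T (vadd s (u (Suc i)))) \<in> Kset m R1 R2 i"
      using nb[of 1] nb[of 2] nb[of 3] nb[of 4] domino_coords_around[OF True, folded P_def]
        D_R1[of P] D_R1[of "vadd P (0, 1)"] D_R2[of P] D_R2[of "vadd P (1, 0)"]
      by (auto simp: u_def Kset_def P_def[symmetric])
    moreover have "T s = 0" using True unfolding T_def by simp
    ultimately show ?thesis using T_range assms(1) by (intro Sset_memI[OF i]) auto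
  next
    case False
    then have "T (vadd s (u j)) = 0" for j
      using even_vadd_u_iff[of s j] unfolding T_def by simp
    moreover have "cyc_less n m 0 (T s)"
      using False D_range[of "domino_coords s"] assms(1) unfolding T_def cyc_less_def by auto
    ultimately show ?thesis using T_range assms(1) by (intro Sset_memI[OF i]) auto
  qed
  with T_range show ?thesis unfolding cyclic_triomino_solvable_def by blast
qed

theorem lemma3p5:
  fixes m n :: nat and R1 R2 :: "(int \<times> int) set"
  assumes "m \<ge> 1"
    and "R1 \<subseteq> {1..int m} \<times> {1..int m}"
    and "R2 \<subseteq> {1..int m} \<times> {1..int m}"
    and "n \<ge> 2 * m + 1"
  shows "cyclic_triomino_solvable n (Sset n m R1 R2) \<longleftrightarrow> domino_solvable {1..int m} R1 R2"
proof
  assume "cyclic_triomino_solvable n (Sset n m R1 R2)"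
  then obtain T where "cyclic_triomino_tiling n m R1 R2 T"
    using assms(2-4) unfolding cyclic_triomino_solvable_def cyclic_triomino_tiling_def by blast
  then show "domino_solvable {1..int m} R1 R2" by (rule cyclic_triomino_tiling.domino_solvable)
next
  assume "domino_solvable {1..int m} R1 R2"
  moreover have "m < n" using assms(4) by simp
  ultimately show "cyclic_triomino_solvable n (Sset n m R1 R2)"
    by (rule cyclic_triomino_solvable_if_domino_solvable[rotated])
qed

end
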